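(* Let $K>0$, $D>0$, $\sigma>0$, $r\in\mathbf{R}$, $0<\tau<T$, and let $N$ denote the standard normal cumulative distribution function. For $u>0$ define the pre-dividend option value \[ V(u,\tau)=\begin{cases}(u-D)N(d(u))-Ke^{-r(T-\tau)}N\!\left(d(u)-\sigma\sqrt{T-\tau}\right), & u>D,\\ 0,& u\le D,\end{cases} \qquad d(u)=\frac{\log(u-D)-\log K+\left(r+\frac12\sigma^2\right)(T-\tau)}{\sigma\sqrt{T-\tau}}, \] and, for $u>D$, its derivative \[ V'(u,\tau)=N(d(u))+\frac{e^{-\frac12 d(u)^2}}{\sigma\sqrt{2\pi(T-\tau)}}-\frac{Ke^{-r(T-\tau)}e^{-\frac12\left(d(u)-\sigma\sqrt{T-\tau}\right)^2}}{\sigma\sqrt{2\pi(T-\tau)}\,(u-D)}. \] For $S>0$ let \[ V(S,0)=\frac{e^{-r\tau}}{\sigma\sqrt{2\pi\tau}}\int_{-\infty}^{\infty}V(e^{y},\tau)\exp\!\left[-\frac{(x-y)^2}{2\sigma^2\tau}\right]dy,\qquad x=\log S+\left(r-\frac{\sigma^2}{2}\right)\tau, \] which is the time-$0$ solution of the Black-Scholes equation $\frac{\partial V}{\partial t}+\frac12\sigma^2S^2\frac{\partial^2V}{\partial S^2}+rS\frac{\partial V}{\partial S}-rV=0$ with terminal condition $V(S,T)=\max\{0,S-K\}$, for a stock paying dividend $D$ at time $\tau$ (the option value being continuous across the dividend date while the stock price drops by $D$). Let $S^*>D$ be fixed and let $M\ge1$ be an integer. Set, for $i=0,\dots,M$,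 \[ S_i=D+\frac{S^*-D}{M}\,i,\qquad d_i=\frac{\log S-\log S_i+\left(r+\frac12\sigma^2\right)\tau}{\sigma\sqrt\tau},\qquad d^*=\frac{\log S-\log S^*+\left(r+\frac12\sigma^2\right)\tau}{\sigma\sqrt\tau}, \] and, for $i=1,\dots,M$, let $S_{i+\frac12}=\frac{S_{i-1}+S_i}{2}$ denote the midpoint of $[S_{i-1},S_i]$, \[ \alpha_i=\frac{M}{S^*-D}\left[V(S_i,\tau)-V(S_{i-1},\tau)\right],\quad A_i=N(d_{i-1})-N(d_i),\quad B_i=N(d_{i-1}-\sigma\sqrt\tau)-N(d_i-\sigma\sqrt\tau). \] Then $V^-_{S^*,M}(S,0)\le V(S,0)\le V^+_{S^*,M}(S,0)$, where \[ V^+_{S^*,M}(S,0)=\sum_{i=1}^M\left\{\alpha_iA_iS+e^{-r\tau}\left[V(S_{i-1},\tau)-\alpha_iS_{i-1}\right]B_i\right\}+SN(d^* )+e^{-r\tau}\left[V(S^*,\tau)-S^*\right]N(d^*-\sigma\sqrt\tau), \] \[ V^-_{S^*,M}(S,0)=S\sum_{i=1}^M V'\!\left(S_{i+\frac12},\tau\right)A_i+e^{-r\tau}\sum_{i=1}^M\left[V\!\left(S_{i+\frac12},\tau\right)-V'\!\left(S_{i+\frac12},\tau\right)S_{i+\frac12}\right]B_i+SN(d^* )-e^{-r\tau}\left(D+Ke^{-r(T-\tau)}\right)N(d^*-\sigma\sqrt\tau). \]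
   Context: Black-Scholes economy: the stock price follows a geometric Brownian motion with volatility $\sigma$ on $[0,\tau)$ and on $[\tau,T]$, jumping down by the known dividend $D$ at the known time $\tau$; $r$ is the constant risk-free rate; the European call has strike $K$ and maturity $T$. $V(u,\tau)$ is the option value at time $\tau$ just before the dividend as a function of the pre-dividend stock price $u$. The paper describes $S_{i+\frac12}$ as "the middle point of each interval $[S_{i-1},S_i]$". *)

theory Defs
  imports "HOL-Analysis.Analysis"
begin

definition normal_cdf :: "real \<Rightarrow> real" where
  "normal_cdf x = (LBINT t:{..x}. exp (- (t^2) / 2) / sqrt (2 * pi))"

definition d_pre :: "real \<Rightarrow> real \<Rightarrow> real \<Rightarrow> real \<Rightarrow> real \<Rightarrow> real \<Rightarrow> real \<Rightarrow> real" where
  "d_pre K D \<sigma> r T \<tau> u =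
     (ln (u - D) - ln K + (r + \<sigma>^2 / 2) * (T - \<tau>)) / (\<sigma> * sqrt (T - \<tau>))"

definition V_pre :: "real \<Rightarrow> real \<Rightarrow> real \<Rightarrow> real \<Rightarrow> real \<Rightarrow> real \<Rightarrow> real \<Rightarrow> real" where
  "V_pre K D \<sigma> r T \<tau> u =
     (if u > D then
        (u - D) * normal_cdf (d_pre K D \<sigma> r T \<tau> u)
        - K * exp (- r * (T - \<tau>)) * normal_cdf (d_pre K D \<sigma> r T \<tau> u - \<sigma> * sqrt (T - \<tau>))
      else 0)"

definition V_pre_deriv :: "real \<Rightarrow> real \<Rightarrow> real \<Rightarrow> real \<Rightarrow> real \<Rightarrow> real \<Rightarrow> real \<Rightarrow> real" where
  "V_pre_deriv K D \<sigma> r T \<tau> u =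
     normal_cdf (d_pre K D \<sigma> r T \<tau> u)
     + exp (- ((d_pre K D \<sigma> r T \<tau> u)^2) / 2) / (\<sigma> * sqrt (2 * pi * (T - \<tau>)))
     - K * exp (- r * (T - \<tau>)) * exp (- ((d_pre K D \<sigma> r T \<tau> u - \<sigma> * sqrt (T - \<tau>))^2) / 2)
       / (\<sigma> * sqrt (2 * pi * (T - \<tau>)) * (u - D))"

definition V_zero :: "real \<Rightarrow> real \<Rightarrow> real \<Rightarrow> real \<Rightarrow> real \<Rightarrow> real \<Rightarrow> real \<Rightarrow> real" where
  "V_zero K D \<sigma> r T \<tau> S =
     (let x = ln S + (r - \<sigma>^2 / 2) * \<tau> in
      exp (- r * \<tau>) / (\<sigma> * sqrt (2 * pi * \<tau>)) *
      (LBINT y. V_pre K D \<sigma> r T \<tau> (exp y) * exp (- ((x - y)^2) / (2 * \<sigma>^2 * \<tau>))))"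

definition grid_pt :: "real \<Rightarrow> real \<Rightarrow> nat \<Rightarrow> nat \<Rightarrow> real" where
  "grid_pt D Sstar M i = D + (Sstar - D) / real M * real i"

definition d_lvl :: "real \<Rightarrow> real \<Rightarrow> real \<Rightarrow> real \<Rightarrow> real \<Rightarrow> real" where
  "d_lvl \<sigma> r \<tau> S X = (ln S - ln X + (r + \<sigma>^2 / 2) * \<tau>) / (\<sigma> * sqrt \<tau>)"

definition V_upper :: "real \<Rightarrow> real \<Rightarrow> real \<Rightarrow> real \<Rightarrow> real \<Rightarrow> real \<Rightarrow> real \<Rightarrow> nat \<Rightarrow> real \<Rightarrow> real" where
  "V_upper K D \<sigma> r T \<tau> Sstar M S =
     (let Si = grid_pt D Sstar M;
          V = V_pre K D \<sigma> r T \<tau>;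
          d = d_lvl \<sigma> r \<tau> S;
          s = \<sigma> * sqrt \<tau>;
          \<alpha> = (\<lambda>i. real M / (Sstar - D) * (V (Si i) - V (Si (i - 1))));
          A = (\<lambda>i. normal_cdf (d (Si (i - 1))) - normal_cdf (d (Si i)));
          B = (\<lambda>i. normal_cdf (d (Si (i - 1)) - s) - normal_cdf (d (Si i) - s))
      in (\<Sum>i=1..M. \<alpha> i * A i * S + exp (- r * \<tau>) * (V (Si (i - 1)) - \<alpha> i * Si (i - 1)) * B i)
         + S * normal_cdf (d Sstar)
         + exp (- r * \<tau>) * (V Sstar - Sstar) * normal_cdf (d Sstar - s))"

definition V_lower :: "real \<Rightarrow> real \<Rightarrow> real \<Rightarrow> real \<Rightarrow> real \<Rightarrow> real \<Rightarrow> real \<Rightarrow> nat \<Rightarrow> real \<Rightarrow> real" where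
  "V_lower K D \<sigma> r T \<tau> Sstar M S =
     (let Si = grid_pt D Sstar M;
          V = V_pre K D \<sigma> r T \<tau>;
          V' = V_pre_deriv K D \<sigma> r T \<tau>;
          mid = (\<lambda>i. (Si (i - 1) + Si i) / 2);
          d = d_lvl \<sigma> r \<tau> S;
          s = \<sigma> * sqrt \<tau>;
          A = (\<lambda>i. normal_cdf (d (Si (i - 1))) - normal_cdf (d (Si i)));
          B = (\<lambda>i. normal_cdf (d (Si (i - 1)) - s) - normal_cdf (d (Si i) - s))
      in S * (\<Sum>i=1..M. V' (mid i) * A i)
         + exp (- r * \<tau>) * (\<Sum>i=1..M. (V (mid i) - V' (mid i) * mid i) * B i)
         + S * normal_cdf (d Sstar)
         - exp (- r * \<tau>) * (D + K * exp (- r * (T - \<tau>))) * normal_cdf (d Sstar - s))"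

end

(* On (D, oo) the pre-dividend value V(u, tau) is convex with derivative N(d(u)), a number
   in [0, 1]; the derivative formula V' of the statement is this same function.  Below D it
   vanishes, and every tangent at a point u > D also lies below V on (-oo, D], since
   V(u) <= N(d(u)) (u - D).  Hence V lies below its chords over the grid S_0, ..., S_M and,
   beyond Sstar, below the line of slope 1 through (Sstar, V(Sstar)); and V lies above its
   tangents at the midpoints and above the forward u - D - K e^{-r(T-tau)} (put-call parity: the
   difference is a put price).  Both bounds are piecewise affine in u.  V(S, 0) integrates
   V(e^y, tau) against the discounted lognormal density, and the payoff (p u + q) 1{u > b}
   integrates to p S N(d(b)) + q e^{-r tau} N(d(b) - sigma sqrt tau); summing these terms
   gives V^- and V^+. *)

theory Submission
  imports Defs "HOL-Probability.Distributions"
begin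

lemma has_bochner_integral_mono:
  fixes f g :: "'a \<Rightarrow> real"
  assumes "has_bochner_integral M f a" "has_bochner_integral M g b"
    and "\<And>x. x \<in> space M \<Longrightarrow> f x \<le> g x"
  shows "a \<le> b"
  using assms integral_mono[of M f g] by (auto simp: has_bochner_integral_iff)

lemma integral_between_has_bochner_integrals:
  fixes f g h :: "'a \<Rightarrow> real"
  assumes "has_bochner_integral M f a" "has_bochner_integral M h b" "g \<in> borel_measurable M"
    and "\<And>x. x \<in> space M \<Longrightarrow> f x \<le> g x" "\<And>x. x \<in> space M \<Longrightarrow> g x \<le> h x"
  shows "a \<le> integral\<^sup>L M g \<and> integral\<^sup>L M g \<le> b"
proof -
  have "integrable M g"
  proof (rule Bochner_Integration.integrable_bound[where f = "\<lambda>x. \<bar>f x\<bar> + \<bar>h x\<bar>"])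
    show "integrable M (\<lambda>x. \<bar>f x\<bar> + \<bar>h x\<bar>)"
      using assms(1,2) by (auto simp: has_bochner_integral_iff)
    show "AE x in M. norm (g x) \<le> norm (\<bar>f x\<bar> + \<bar>h x\<bar>)"
      using assms(4,5) by (intro AE_I2) force
  qed fact
  then have "has_bochner_integral M g (integral\<^sup>L M g)"
    by (rule has_bochner_integral_integrable)
  with assms show ?thesis
    by (blast intro: has_bochner_integral_mono)
qed

subsection \<open>The standard normal distribution function\<close>

lemma normal_cdf_eq_integral_atMost: "normal_cdf x = (LBINT t:{..x}. std_normal_density t)"
  by (simp add: normal_cdf_def std_normal_density_def)

lemma normal_cdf_eq_integral_lessThan:
  "normal_cdf x = (LBINT t:{..<x}. std_normal_density t)"
proof -
  have "normal_cdf x = (LBINT t:{..x}. std_normal_density t)"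
    by (rule normal_cdf_eq_integral_atMost)
  also have "\<dots> = (LBINT t:{..<x}. std_normal_density t)"
    by (rule set_integral_cong_set) (auto simp: set_borel_measurable_def
        intro!: eventually_mono[OF AE_lborel_singleton[of x]])
  finally show ?thesis .
qed

lemma integrable_indicator_std_normal_density:
  "A \<in> sets borel \<Longrightarrow> integrable lborel (\<lambda>x. indicator A x * std_normal_density x)"
  using integrable_mult_indicator[of A lborel std_normal_density] by simp

lemma has_real_derivative_normal_cdf:
  "(normal_cdf has_real_derivative std_normal_density x) (at x)"
proof -
  have integrable: "interval_lebesgue_integrable lborel a b std_normal_density" for a b
    unfolding interval_lebesgue_integrable_def set_integrable_def
    by (auto intro!: integrable_indicator_std_normal_density)
  have split: "normal_cdf u = normal_cdf 0 + (LBINT t=ereal 0..ereal u. std_normal_density t)" for u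
    using interval_integral_sum[OF integrable, of "-\<infinity>" 0 u]
    by (simp add: normal_cdf_eq_integral_lessThan interval_lebesgue_integral_def zero_ereal_def)
  have "((\<lambda>u. LBINT t=ereal 0..ereal u. std_normal_density t) has_vector_derivative
          std_normal_density x) (at x within {min x 0 - 1..max x 0 + 1})"
    by (rule interval_integral_FTC2)
       (auto simp: std_normal_density_def intro!: continuous_intros)
  then have "((\<lambda>u. LBINT t=ereal 0..ereal u. std_normal_density t) has_real_derivative
          std_normal_density x) (at x)"
    by (subst (asm) at_within_interior)
       (auto simp: interior_atLeastAtMost_real has_real_derivative_iff_has_vector_derivative)
  then show ?thesis
    by (subst split[abs_def]) (auto intro!: derivative_eq_intros)
qed

lemma isCont_normal_cdf [continuous_intros]: "isCont normal_cdf x"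
  using has_real_derivative_normal_cdf DERIV_isCont by blast

lemma borel_measurable_normal_cdf [measurable]: "normal_cdf \<in> borel_measurable borel"
  by (intro borel_measurable_continuous_onI continuous_at_imp_continuous_on)
     (auto intro: isCont_normal_cdf)

lemma normal_cdf_mono: "x \<le> y \<Longrightarrow> normal_cdf x \<le> normal_cdf y"
  by (rule DERIV_nonneg_imp_nondecreasing[of x y normal_cdf])
     (auto intro: has_real_derivative_normal_cdf)

lemma normal_cdf_nonneg: "normal_cdf x \<ge> 0"
  unfolding normal_cdf_eq_integral_lessThan set_lebesgue_integral_def
  by (rule Bochner_Integration.integral_nonneg) (auto simp: indicator_def)

lemma has_bochner_integral_gaussian_tail:
  fixes s :: real
  assumes "s > 0"
  shows "has_bochner_integral lborel (\<lambda>y. indicator {t<..} y * exp (- ((m - y)\<^sup>2) / (2 * s\<^sup>2)))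
           (s * sqrt (2 * pi) * normal_cdf ((m - t) / s))"
    (is "has_bochner_integral lborel ?f ?I")
proof -
  have substitution: "?f (m + (- s) * z)
      = sqrt (2 * pi) * (indicator {..<(m - t) / s} z * std_normal_density z)" for z :: real
    using assms by (auto simp: indicator_def pos_less_divide_eq algebra_simps power_mult_distrib
        std_normal_density_def)
  have standard: "has_bochner_integral lborel
      (\<lambda>z. indicator {..<(m - t) / s} z * std_normal_density z) (normal_cdf ((m - t) / s))"
    unfolding normal_cdf_eq_integral_lessThan set_lebesgue_integral_def has_bochner_integral_iff
    by (auto intro!: integrable_indicator_std_normal_density)
  have rescaled: "?I /\<^sub>R \<bar>- s\<bar> = sqrt (2 * pi) * normal_cdf ((m - t) / s)"
    using assms by simp
  have "has_bochner_integral lborel (\<lambda>z. ?f (m + (- s) * z)) (?I /\<^sub>R \<bar>- s\<bar>)"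
    unfolding substitution rescaled by (auto intro!: has_bochner_integral_mult_right standard)
  then show ?thesis
    using assms by (subst lborel_has_bochner_integral_real_affine_iff[where c = "- s" and t = m]) auto
qed

lemma has_bochner_integral_std_normal_upper_tail:
  "has_bochner_integral lborel (\<lambda>y. indicator {x<..} y * std_normal_density y) (normal_cdf (- x))"
proof -
  have "has_bochner_integral lborel (\<lambda>y. indicator {x<..} y * exp (- ((0 - y)\<^sup>2) / (2 * 1\<^sup>2)) / sqrt (2 * pi))
          (1 * sqrt (2 * pi) * normal_cdf ((0 - x) / 1) / sqrt (2 * pi))"
    by (intro has_bochner_integral_divide_zero has_bochner_integral_gaussian_tail) simp
  then show ?thesis
    by (simp add: std_normal_density_def)
qed

lemma normal_cdf_minus: "normal_cdf (- x) = 1 - normal_cdf x"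
proof -
  have lower: "has_bochner_integral lborel (\<lambda>y. indicator {..x} y * std_normal_density y) (normal_cdf x)"
    unfolding normal_cdf_eq_integral_atMost has_bochner_integral_iff set_lebesgue_integral_def
    by (auto intro!: integrable_indicator_std_normal_density)
  have "(\<lambda>y. indicator {..x} y * std_normal_density y + indicator {x<..} y * std_normal_density y)
      = std_normal_density"
    by (auto simp: fun_eq_iff indicator_def)
  with has_bochner_integral_add[OF lower has_bochner_integral_std_normal_upper_tail[of x]]
  have "has_bochner_integral lborel std_normal_density (normal_cdf x + normal_cdf (- x))"
    by simp
  then show ?thesis
    using integral_normal_density[of 0 1] has_bochner_integral_integral_eq by fastforce
qed

lemma normal_cdf_le_1: "normal_cdf x \<le> 1"
  using normal_cdf_minus[of "- x"] normal_cdf_nonneg[of "- x"] by simp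

lemma exp_mult_normal_cdf_minus_le:
  fixes a d :: real
  assumes "a \<ge> 0"
  shows "exp (a * d - a\<^sup>2 / 2) * normal_cdf (- d) \<le> normal_cdf (a - d)"
proof -
  have "exp (a * d - a\<^sup>2 / 2) * (sqrt (2 * pi) * normal_cdf (- d)) \<le> sqrt (2 * pi) * normal_cdf (a - d)"
  proof (rule has_bochner_integral_mono)
    show "has_bochner_integral lborel
        (\<lambda>y. exp (a * d - a\<^sup>2 / 2) * (indicator {d<..} y * exp (- ((0 - y)\<^sup>2) / (2 * 1\<^sup>2))))
        (exp (a * d - a\<^sup>2 / 2) * (sqrt (2 * pi) * normal_cdf (- d)))"
      using has_bochner_integral_gaussian_tail[of 1 d 0] by (auto intro: has_bochner_integral_mult_right)
    show "has_bochner_integral lborel (\<lambda>y. indicator {d<..} y * exp (- ((a - y)\<^sup>2) / (2 * 1\<^sup>2)))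
        (sqrt (2 * pi) * normal_cdf (a - d))"
      using has_bochner_integral_gaussian_tail[of 1 d a] by simp
    fix y :: real
    have "d < y \<Longrightarrow> a * d - a\<^sup>2 / 2 + - ((0 - y)\<^sup>2) / 2 \<le> - ((a - y)\<^sup>2) / 2"
      using mult_left_mono[of d y a] assms by (simp add: power2_eq_square algebra_simps)
    then show "exp (a * d - a\<^sup>2 / 2) * (indicator {d<..} y * exp (- ((0 - y)\<^sup>2) / (2 * 1\<^sup>2)))
        \<le> indicator {d<..} y * exp (- ((a - y)\<^sup>2) / (2 * 1\<^sup>2))"
      by (auto simp: indicator_def mult_exp_exp)
  qed
  then show ?thesis
    by (simp add: mult.left_commute)
qed

subsection \<open>Piecewise affine functions on a grid\<close>

definition piecewise_affine ::
    "(nat \<Rightarrow> real) \<Rightarrow> nat \<Rightarrow> (nat \<Rightarrow> real) \<Rightarrow> (nat \<Rightarrow> real) \<Rightarrow> real \<Rightarrow> real \<Rightarrow> real \<Rightarrow> real" where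
  "piecewise_affine G M p q p' q' u =
     (\<Sum>i=1..M. if G (i - 1) < u \<and> u \<le> G i then p i * u + q i else 0)
     + (if G M < u then p' * u + q' else 0)"

lemma grid_interval_exists:
  fixes G :: "nat \<Rightarrow> real"
  assumes "G 0 < u" "u \<le> G M"
  obtains k where "k \<in> {1..M}" "G (k - 1) < u" "u \<le> G k"
  using assms
proof (induction M arbitrary: thesis)
  case 0
  then show ?case by simp
next
  case (Suc M)
  show ?case
  proof (cases "u \<le> G M")
    case True
    then show ?thesis
      using Suc.IH[of thesis] Suc.prems by force
  next
    case False
    then show ?thesis
      using Suc.prems(1)[of "Suc M"] Suc.prems(3) by simp
  qed
qed

lemma grid_position_cases:
  fixes G :: "nat \<Rightarrow> real"
  obtains "u \<le> G 0" | k where "k \<in> {1..M}" "G (k - 1) < u" "u \<le> G k" | "G M < u"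
  by (metis grid_interval_exists not_le)

context
  fixes G :: "nat \<Rightarrow> real"
  assumes mono_G: "mono G"
begin

lemma piecewise_affine_below:
  assumes "u \<le> G 0"
  shows "piecewise_affine G M p q p' q' u = 0"
proof -
  have "\<not> G i < u" for i
    using assms monoD[OF mono_G, of 0 i] by simp
  then show ?thesis
    by (simp add: piecewise_affine_def)
qed

lemma piecewise_affine_above:
  assumes "G M < u"
  shows "piecewise_affine G M p q p' q' u = p' * u + q'"
proof -
  have "\<not> u \<le> G i" if "i \<le> M" for i
    using assms monoD[OF mono_G that] by simp
  then show ?thesis
    using assms by (simp add: piecewise_affine_def)
qed

lemma piecewise_affine_on_interval:
  assumes k: "k \<in> {1..M}" "G (k - 1) < u" "u \<le> G k"
  shows "piecewise_affine G M p q p' q' u = p k * u + q k"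
proof -
  have "G (i - 1) < u \<and> u \<le> G i \<longleftrightarrow> i = k" if "i \<in> {1..M}" for i
  proof
    assume i: "G (i - 1) < u \<and> u \<le> G i"
    show "i = k"
    proof (rule ccontr)
      assume "i \<noteq> k"
      then have "i \<le> k - 1 \<or> k \<le> i - 1"
        using that k(1) by auto
      then show False
        using monoD[OF mono_G, of i "k - 1"] monoD[OF mono_G, of k "i - 1"] i k by auto
    qed
  qed (use k in simp)
  moreover have "\<not> G M < u"
    using monoD[OF mono_G, of k M] k by auto
  ultimately have "piecewise_affine G M p q p' q' u = (\<Sum>i=1..M. if i = k then p i * u + q i else 0)"
    unfolding piecewise_affine_def by (auto intro!: sum.cong)
  also have "\<dots> = p k * u + q k"
    using k(1) by simp
  finally show ?thesis .
qed

end

subsection \<open>The pre-dividend option value\<close>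

context
  fixes K D \<sigma> r T \<tau> :: real
  assumes K_pos: "K > 0" and \<sigma>_pos: "\<sigma> > 0" and \<tau>_less_T: "\<tau> < T"
begin

lemma d_pre_mono: "D < x \<Longrightarrow> x \<le> y \<Longrightarrow> d_pre K D \<sigma> r T \<tau> x \<le> d_pre K D \<sigma> r T \<tau> y"
  unfolding d_pre_def using \<sigma>_pos \<tau>_less_T by (intro divide_right_mono) auto

lemma ex_dividend_price_eq:
  assumes "D < u"
  shows "u - D = K * exp (- r * (T - \<tau>))
           * exp (\<sigma> * sqrt (T - \<tau>) * d_pre K D \<sigma> r T \<tau> u - (\<sigma> * sqrt (T - \<tau>))\<^sup>2 / 2)"
proof -
  have "\<sigma> * sqrt (T - \<tau>) * d_pre K D \<sigma> r T \<tau> u = ln (u - D) - ln K + (r + \<sigma>\<^sup>2 / 2) * (T - \<tau>)"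
    using \<sigma>_pos \<tau>_less_T by (simp add: d_pre_def)
  moreover have "(\<sigma> * sqrt (T - \<tau>))\<^sup>2 = \<sigma>\<^sup>2 * (T - \<tau>)"
    using \<tau>_less_T by (simp add: power_mult_distrib)
  ultimately have "\<sigma> * sqrt (T - \<tau>) * d_pre K D \<sigma> r T \<tau> u - (\<sigma> * sqrt (T - \<tau>))\<^sup>2 / 2
      = ln (u - D) - ln K + r * (T - \<tau>)"
    by (simp add: algebra_simps)
  moreover have "exp (ln (u - D) - ln K + r * (T - \<tau>)) = (u - D) / K * exp (r * (T - \<tau>))"
    using assms K_pos by (simp add: exp_add exp_diff)
  ultimately show ?thesis
    using K_pos by (simp add: mult_exp_exp)
qed

lemma discounted_strike_density_identity:
  assumes "D < u"
  shows "K * exp (- r * (T - \<tau>)) * exp (- ((d_pre K D \<sigma> r T \<tau> u - \<sigma> * sqrt (T - \<tau>))\<^sup>2) / 2)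
       = (u - D) * exp (- ((d_pre K D \<sigma> r T \<tau> u)\<^sup>2) / 2)"
proof -
  define d s where "d = d_pre K D \<sigma> r T \<tau> u" and "s = \<sigma> * sqrt (T - \<tau>)"
  have "exp (- ((d - s)\<^sup>2) / 2) = exp (s * d - s\<^sup>2 / 2) * exp (- (d\<^sup>2) / 2)"
    unfolding exp_add[symmetric] by (rule arg_cong[where f = exp]) (simp add: power2_eq_square field_simps)
  then show ?thesis
    using ex_dividend_price_eq[OF assms] unfolding d_def[symmetric] s_def[symmetric]
    by simp
qed

lemma V_pre_deriv_eq:
  assumes "D < u"
  shows "V_pre_deriv K D \<sigma> r T \<tau> u = normal_cdf (d_pre K D \<sigma> r T \<tau> u)"
  using discounted_strike_density_identity[OF assms] assms
  by (simp add: V_pre_deriv_def)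

lemma has_real_derivative_d_pre:
  assumes "D < u"
  shows "(d_pre K D \<sigma> r T \<tau> has_real_derivative 1 / ((u - D) * (\<sigma> * sqrt (T - \<tau>)))) (at u)"
  unfolding d_pre_def[abs_def] using assms \<sigma>_pos \<tau>_less_T
  by (auto intro!: derivative_eq_intros)

lemma has_real_derivative_V_pre:
  assumes "D < u"
  shows "(V_pre K D \<sigma> r T \<tau> has_real_derivative normal_cdf (d_pre K D \<sigma> r T \<tau> u)) (at u)"
proof -
  define d s e where "d = d_pre K D \<sigma> r T \<tau>" and "s = \<sigma> * sqrt (T - \<tau>)"
    and "e = 1 / ((u - D) * s)"
  have "(d has_real_derivative e) (at u)"
    unfolding d_def e_def s_def by (rule has_real_derivative_d_pre[OF assms])
  note derivative_rules = derivative_eq_intros has_real_derivative_normal_cdf[THEN DERIV_chain2] this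
  have "((\<lambda>u. (u - D) * normal_cdf (d u) - K * exp (- r * (T - \<tau>)) * normal_cdf (d u - s))
        has_real_derivative normal_cdf (d u)
          + e * ((u - D) * std_normal_density (d u) - K * exp (- r * (T - \<tau>)) * std_normal_density (d u - s)))
        (at u)"
    by (rule derivative_rules refl | simp add: algebra_simps)+
  moreover have "K * exp (- r * (T - \<tau>)) * std_normal_density (d u - s) = (u - D) * std_normal_density (d u)"
    using discounted_strike_density_identity[OF assms]
    by (simp add: std_normal_density_def d_def s_def mult_ac)
  ultimately have "((\<lambda>u. (u - D) * normal_cdf (d u) - K * exp (- r * (T - \<tau>)) * normal_cdf (d u - s))
        has_real_derivative normal_cdf (d u)) (at u)"
    by simp
  then show ?thesis
    unfolding d_def by (rule has_field_derivative_transform_within_open[where S = "{D<..}"])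
       (use assms in \<open>auto simp: V_pre_def d_def s_def\<close>)
qed

lemma convex_on_V_pre: "convex_on {D<..} (V_pre K D \<sigma> r T \<tau>)"
  by (rule convex_on_realI[where f' = "\<lambda>u. normal_cdf (d_pre K D \<sigma> r T \<tau> u)"])
     (auto intro: has_real_derivative_V_pre normal_cdf_mono d_pre_mono)

lemma V_pre_above_tangent:
  assumes "D < u"
  shows "V_pre K D \<sigma> r T \<tau> u + normal_cdf (d_pre K D \<sigma> r T \<tau> u) * (a - u) \<le> V_pre K D \<sigma> r T \<tau> a"
proof (cases "D < a")
  case True
  have "normal_cdf (d_pre K D \<sigma> r T \<tau> u) * (a - u) \<le> V_pre K D \<sigma> r T \<tau> a - V_pre K D \<sigma> r T \<tau> u"
    by (rule convex_on_imp_above_tangent[OF convex_on_V_pre])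
       (use assms True in \<open>auto simp: interior_open
         intro: has_field_derivative_at_within has_real_derivative_V_pre\<close>)
  then show ?thesis
    by simp
next
  case False
  have "V_pre K D \<sigma> r T \<tau> u \<le> normal_cdf (d_pre K D \<sigma> r T \<tau> u) * (u - D)"
    using assms K_pos normal_cdf_nonneg by (simp add: V_pre_def mult.commute)
  also have "\<dots> \<le> normal_cdf (d_pre K D \<sigma> r T \<tau> u) * (u - a)"
    using False normal_cdf_nonneg by (intro mult_left_mono) auto
  finally show ?thesis
    using False by (simp add: V_pre_def algebra_simps)
qed

lemma V_pre_below_chord:
  assumes "a < u" "u \<le> b" "D < u"
  shows "V_pre K D \<sigma> r T \<tau> u
           \<le> V_pre K D \<sigma> r T \<tau> a + (V_pre K D \<sigma> r T \<tau> b - V_pre K D \<sigma> r T \<tau> a) / (b - a) * (u - a)"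
proof -
  define V \<Delta> where "V = V_pre K D \<sigma> r T \<tau>" and "\<Delta> = normal_cdf (d_pre K D \<sigma> r T \<tau> u)"
  have "(b - u) * (V u + \<Delta> * (a - u)) \<le> (b - u) * V a"
    using V_pre_above_tangent[OF assms(3), of a] assms(2) unfolding V_def \<Delta>_def
    by (intro mult_left_mono) auto
  moreover have "(u - a) * (V u + \<Delta> * (b - u)) \<le> (u - a) * V b"
    using V_pre_above_tangent[OF assms(3), of b] assms(1) unfolding V_def \<Delta>_def
    by (intro mult_left_mono) auto
  ultimately have "(b - a) * V u \<le> (b - u) * V a + (u - a) * V b"
    by (simp add: algebra_simps)
  then show ?thesis
    using assms unfolding V_def[symmetric] by (simp add: field_simps)
qed

lemma forward_le_V_pre: "u - D - K * exp (- r * (T - \<tau>)) \<le> V_pre K D \<sigma> r T \<tau> u"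
proof (cases "D < u")
  case True
  define d s Kd where "d = d_pre K D \<sigma> r T \<tau> u" and "s = \<sigma> * sqrt (T - \<tau>)"
    and "Kd = K * exp (- r * (T - \<tau>))"
  have normal_cdf_flip: "normal_cdf (s - d) = 1 - normal_cdf (d - s)"
    using normal_cdf_minus[of "d - s"] by simp
  have "V_pre K D \<sigma> r T \<tau> u - (u - D - Kd) = Kd * normal_cdf (s - d) - (u - D) * normal_cdf (- d)"
    unfolding normal_cdf_flip normal_cdf_minus
    using True by (simp add: V_pre_def d_def s_def Kd_def algebra_simps)
  also have "\<dots> = Kd * (normal_cdf (s - d) - exp (s * d - s\<^sup>2 / 2) * normal_cdf (- d))"
    using ex_dividend_price_eq[OF True] unfolding d_def[symmetric] s_def[symmetric] Kd_def[symmetric]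
    by (simp add: algebra_simps)
  also have "\<dots> \<ge> 0"
    using exp_mult_normal_cdf_minus_le[of s d] \<sigma>_pos \<tau>_less_T K_pos by (simp add: s_def Kd_def)
  finally show ?thesis
    by (simp add: Kd_def)
next
  case False
  have "0 < K * exp (- r * (T - \<tau>))"
    using K_pos by simp
  with False show ?thesis
    by (simp add: V_pre_def)
qed

lemma V_pre_le_chord_interpolant:
  fixes G :: "nat \<Rightarrow> real"
  assumes "mono G" "G 0 = D"
  defines "\<alpha> \<equiv> \<lambda>i. (V_pre K D \<sigma> r T \<tau> (G i) - V_pre K D \<sigma> r T \<tau> (G (i - 1))) / (G i - G (i - 1))"
  shows "V_pre K D \<sigma> r T \<tau> u
           \<le> piecewise_affine G M \<alpha> (\<lambda>i. V_pre K D \<sigma> r T \<tau> (G (i - 1)) - \<alpha> i * G (i - 1))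
                1 (V_pre K D \<sigma> r T \<tau> (G M) - G M) u"
proof (cases rule: grid_position_cases[where G = G and u = u and M = M])
  case 1
  then show ?thesis
    using assms(2) by (simp add: piecewise_affine_below[OF assms(1)] V_pre_def)
next
  case (2 k)
  have "D \<le> G (k - 1)"
    using monoD[OF assms(1), of 0 "k - 1"] assms(2) by simp
  then have "V_pre K D \<sigma> r T \<tau> u \<le> V_pre K D \<sigma> r T \<tau> (G (k - 1)) + \<alpha> k * (u - G (k - 1))"
    unfolding \<alpha>_def using 2 by (intro V_pre_below_chord) auto
  with 2 show ?thesis
    by (simp add: piecewise_affine_on_interval[OF assms(1)] algebra_simps)
next
  case 3
  have "D < u"
    using 3 monoD[OF assms(1), of 0 M] assms(2) by simp
  have "V_pre K D \<sigma> r T \<tau> u + (G M - u) \<le> V_pre K D \<sigma> r T \<tau> u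
          + normal_cdf (d_pre K D \<sigma> r T \<tau> u) * (G M - u)"
    using 3 normal_cdf_le_1 by (simp add: mult_le_cancel_right1)
  also have "\<dots> \<le> V_pre K D \<sigma> r T \<tau> (G M)"
    by (rule V_pre_above_tangent[OF \<open>D < u\<close>])
  finally show ?thesis
    using 3 by (simp add: piecewise_affine_above[OF assms(1)])
qed

lemma tangent_interpolant_le_V_pre:
  fixes G c :: "nat \<Rightarrow> real"
  assumes "mono G" "G 0 = D" "\<And>i. i \<in> {1..M} \<Longrightarrow> D < c i"
  shows "piecewise_affine G M (\<lambda>i. V_pre_deriv K D \<sigma> r T \<tau> (c i))
             (\<lambda>i. V_pre K D \<sigma> r T \<tau> (c i) - V_pre_deriv K D \<sigma> r T \<tau> (c i) * c i)
             1 (- (D + K * exp (- r * (T - \<tau>)))) u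
           \<le> V_pre K D \<sigma> r T \<tau> u"
proof (cases rule: grid_position_cases[where G = G and u = u and M = M])
  case 1
  then show ?thesis
    using assms(2) by (simp add: piecewise_affine_below[OF assms(1)] V_pre_def)
next
  case (2 k)
  have "V_pre K D \<sigma> r T \<tau> (c k) + normal_cdf (d_pre K D \<sigma> r T \<tau> (c k)) * (u - c k) \<le> V_pre K D \<sigma> r T \<tau> u"
    using assms(3)[OF 2(1)] by (rule V_pre_above_tangent)
  with 2 show ?thesis
    using V_pre_deriv_eq[OF assms(3)[OF 2(1)]]
    by (simp add: piecewise_affine_on_interval[OF assms(1)] algebra_simps)
next
  case 3
  then show ?thesis
    using forward_le_V_pre[of u] by (simp add: piecewise_affine_above[OF assms(1)])
qed

end

lemma borel_measurable_V_pre [measurable]: "V_pre K D \<sigma> r T \<tau> \<in> borel_measurable borel"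
  unfolding V_pre_def[abs_def] d_pre_def by measurable

subsection \<open>Black--Scholes integrals of piecewise affine payoffs\<close>

text \<open>The discounted risk-neutral density of \<open>log S\<^sub>\<tau>\<close> when the stock starts at \<open>S\<close>.\<close>

definition bs_density :: "real \<Rightarrow> real \<Rightarrow> real \<Rightarrow> real \<Rightarrow> real \<Rightarrow> real" where
  "bs_density \<sigma> r \<tau> S y = exp (- r * \<tau>) / (\<sigma> * sqrt (2 * pi * \<tau>))
     * exp (- ((ln S + (r - \<sigma>\<^sup>2 / 2) * \<tau> - y)\<^sup>2) / (2 * \<sigma>\<^sup>2 * \<tau>))"

definition bs_tail_value :: "real \<Rightarrow> real \<Rightarrow> real \<Rightarrow> real \<Rightarrow> real \<Rightarrow> real \<Rightarrow> real \<Rightarrow> real" where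
  "bs_tail_value \<sigma> r \<tau> S b p q = p * S * normal_cdf (d_lvl \<sigma> r \<tau> S b)
     + q * exp (- r * \<tau>) * normal_cdf (d_lvl \<sigma> r \<tau> S b - \<sigma> * sqrt \<tau>)"

lemma bs_density_nonneg: "\<sigma> > 0 \<Longrightarrow> \<tau> > 0 \<Longrightarrow> bs_density \<sigma> r \<tau> S y \<ge> 0"
  by (simp add: bs_density_def)

lemma V_zero_eq_integral_bs_density:
  "V_zero K D \<sigma> r T \<tau> S = (LBINT y. V_pre K D \<sigma> r T \<tau> (exp y) * bs_density \<sigma> r \<tau> S y)"
  by (simp add: V_zero_def bs_density_def Let_def mult_ac)

context
  fixes \<sigma> r \<tau> S :: real
  assumes \<sigma>_pos: "\<sigma> > 0" and \<tau>_pos: "\<tau> > 0" and S_pos: "S > 0"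
begin

lemma has_bochner_integral_bs_density_tails:
  assumes "b > 0"
  shows "has_bochner_integral lborel (\<lambda>y. indicator {ln b<..} y * bs_density \<sigma> r \<tau> S y)
           (exp (- r * \<tau>) * normal_cdf (d_lvl \<sigma> r \<tau> S b - \<sigma> * sqrt \<tau>))"
    and "has_bochner_integral lborel (\<lambda>y. indicator {ln b<..} y * (exp y * bs_density \<sigma> r \<tau> S y))
           (S * normal_cdf (d_lvl \<sigma> r \<tau> S b))"
proof -
  define x s c where "x = ln S + (r - \<sigma>\<^sup>2 / 2) * \<tau>" and "s = \<sigma> * sqrt \<tau>"
    and "c = exp (- r * \<tau>) / (\<sigma> * sqrt (2 * pi * \<tau>))"
  have s_pos: "s > 0" and s_sq: "s\<^sup>2 = \<sigma>\<^sup>2 * \<tau>"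
    using \<sigma>_pos \<tau>_pos by (simp_all add: s_def power_mult_distrib)
  have c_s: "c * (s * sqrt (2 * pi)) = exp (- r * \<tau>)"
    using \<sigma>_pos \<tau>_pos by (simp add: c_def s_def real_sqrt_mult)
  have density: "bs_density \<sigma> r \<tau> S y = c * exp (- ((x - y)\<^sup>2) / (2 * s\<^sup>2))" for y
    by (simp add: bs_density_def x_def c_def s_sq mult.assoc)
  have completed_square: "exp y * exp (- ((x - y)\<^sup>2) / (2 * s\<^sup>2))
      = exp (x + s\<^sup>2 / 2) * exp (- ((x + s\<^sup>2 - y)\<^sup>2) / (2 * s\<^sup>2))" for y
    using s_pos by (simp add: mult_exp_exp field_simps power2_eq_square)
  have "(x - ln b) / s = d_lvl \<sigma> r \<tau> S b - \<sigma> * sqrt \<tau>"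
    using s_pos s_sq by (simp add: d_lvl_def x_def s_def[symmetric] field_simps power2_eq_square)
  then have total_mass: "exp (- r * \<tau>) * normal_cdf (d_lvl \<sigma> r \<tau> S b - \<sigma> * sqrt \<tau>)
      = c * (s * sqrt (2 * pi) * normal_cdf ((x - ln b) / s))"
    using c_s by simp
  have integrand: "(\<lambda>y. indicator {ln b<..} y * bs_density \<sigma> r \<tau> S y)
      = (\<lambda>y. c * (indicator {ln b<..} y * exp (- ((x - y)\<^sup>2) / (2 * s\<^sup>2))))"
    by (simp add: fun_eq_iff density mult.left_commute)
  show "has_bochner_integral lborel (\<lambda>y. indicator {ln b<..} y * bs_density \<sigma> r \<tau> S y)
           (exp (- r * \<tau>) * normal_cdf (d_lvl \<sigma> r \<tau> S b - \<sigma> * sqrt \<tau>))"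
    unfolding integrand total_mass
    by (rule has_bochner_integral_mult_right) (rule has_bochner_integral_gaussian_tail[OF s_pos])
  have shifted_arg: "(x + s\<^sup>2 - ln b) / s = d_lvl \<sigma> r \<tau> S b"
    using s_pos s_sq by (simp add: d_lvl_def x_def s_def[symmetric] field_simps)
  have forward: "exp (- r * \<tau>) * exp (x + s\<^sup>2 / 2) = S"
    unfolding mult_exp_exp using S_pos by (simp add: x_def s_sq algebra_simps)
  have "c * exp (x + s\<^sup>2 / 2) * (s * sqrt (2 * pi) * normal_cdf ((x + s\<^sup>2 - ln b) / s))
      = c * (s * sqrt (2 * pi)) * exp (x + s\<^sup>2 / 2) * normal_cdf ((x + s\<^sup>2 - ln b) / s)"
    by (simp only: mult_ac)
  also have "\<dots> = S * normal_cdf (d_lvl \<sigma> r \<tau> S b)"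
    unfolding c_s forward shifted_arg ..
  finally have total_mass: "S * normal_cdf (d_lvl \<sigma> r \<tau> S b)
      = c * exp (x + s\<^sup>2 / 2) * (s * sqrt (2 * pi) * normal_cdf ((x + s\<^sup>2 - ln b) / s))"
    by simp
  have integrand: "(\<lambda>y. indicator {ln b<..} y * (exp y * bs_density \<sigma> r \<tau> S y))
      = (\<lambda>y. c * exp (x + s\<^sup>2 / 2) * (indicator {ln b<..} y * exp (- ((x + s\<^sup>2 - y)\<^sup>2) / (2 * s\<^sup>2))))"
    unfolding density mult.left_commute[of "exp _"] completed_square by (simp add: fun_eq_iff mult_ac)
  show "has_bochner_integral lborel (\<lambda>y. indicator {ln b<..} y * (exp y * bs_density \<sigma> r \<tau> S y))
           (S * normal_cdf (d_lvl \<sigma> r \<tau> S b))"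
    unfolding integrand total_mass
    by (rule has_bochner_integral_mult_right) (rule has_bochner_integral_gaussian_tail[OF s_pos])
qed

lemma has_bochner_integral_affine_tail:
  assumes "b > 0"
  shows "has_bochner_integral lborel (\<lambda>y. (if b < exp y then p * exp y + q else 0) * bs_density \<sigma> r \<tau> S y)
           (bs_tail_value \<sigma> r \<tau> S b p q)"
proof -
  have "(if b < exp y then p * exp y + q else 0) * bs_density \<sigma> r \<tau> S y
      = p * (indicator {ln b<..} y * (exp y * bs_density \<sigma> r \<tau> S y))
        + q * (indicator {ln b<..} y * bs_density \<sigma> r \<tau> S y)" for y
    using assms ln_less_cancel_iff[of b "exp y"] by (auto simp: indicator_def algebra_simps)
  then show ?thesis
    unfolding bs_tail_value_def
    using has_bochner_integral_bs_density_tails[OF assms]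
    by (auto simp: mult.assoc intro!: has_bochner_integral_add has_bochner_integral_mult_right)
qed

lemma has_bochner_integral_piecewise_affine:
  fixes G :: "nat \<Rightarrow> real"
  assumes "mono G" "G 0 > 0"
  shows "has_bochner_integral lborel (\<lambda>y. piecewise_affine G M p q p' q' (exp y) * bs_density \<sigma> r \<tau> S y)
           ((\<Sum>i=1..M. bs_tail_value \<sigma> r \<tau> S (G (i - 1)) (p i) (q i) - bs_tail_value \<sigma> r \<tau> S (G i) (p i) (q i))
            + bs_tail_value \<sigma> r \<tau> S (G M) p' q')"
proof -
  define tail where "tail b a c y = (if b < exp y then a * exp y + c else 0) * bs_density \<sigma> r \<tau> S y"
    for b a c y
  have G_pos: "G i > 0" for i
    using assms monoD[OF assms(1), of 0 i] by simp
  have "piecewise_affine G M p q p' q' (exp y) * bs_density \<sigma> r \<tau> S y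
      = (\<Sum>i=1..M. tail (G (i - 1)) (p i) (q i) y - tail (G i) (p i) (q i) y) + tail (G M) p' q' y" for y
  proof -
    have "(if G (i - 1) < u \<and> u \<le> G i then z else 0) = (if G (i - 1) < u then z else 0) - (if G i < u then z else 0)"
      for i u and z :: real
      using monoD[OF assms(1), of "i - 1" i] by auto
    then show ?thesis
      by (simp add: piecewise_affine_def tail_def distrib_right sum_distrib_right left_diff_distrib)
  qed
  then show ?thesis
    using G_pos unfolding tail_def
    by (auto intro!: has_bochner_integral_add has_bochner_integral_sum has_bochner_integral_diff
        has_bochner_integral_affine_tail)
qed

end

subsection \<open>The bounds on the uniform grid\<close>

lemma grid_pt_0 [simp]: "grid_pt D Sstar M 0 = D"
  by (simp add: grid_pt_def)

lemma grid_pt_last: "M \<ge> 1 \<Longrightarrow> grid_pt D Sstar M M = Sstar"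
  by (simp add: grid_pt_def)

lemma mono_grid_pt: "D \<le> Sstar \<Longrightarrow> mono (grid_pt D Sstar M)"
  unfolding grid_pt_def mono_def by (auto intro!: divide_right_mono mult_left_mono)

lemma grid_pt_step:
  "i \<ge> 1 \<Longrightarrow> grid_pt D Sstar M i - grid_pt D Sstar M (i - 1) = (Sstar - D) / real M"
  by (simp add: grid_pt_def of_nat_diff right_diff_distrib)

lemma grid_pt_midpoint_gt:
  assumes "D < Sstar" "i \<in> {1..M}"
  shows "D < (grid_pt D Sstar M (i - 1) + grid_pt D Sstar M i) / 2"
proof -
  have "0 < (Sstar - D) / real M"
    using assms by simp
  then have "grid_pt D Sstar M (i - 1) < grid_pt D Sstar M i"
    using assms(2) grid_pt_step[of i D Sstar M] by simp
  moreover have "D \<le> grid_pt D Sstar M (i - 1)"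
    using assms(1) by (simp add: grid_pt_def)
  ultimately show ?thesis
    by simp
qed

lemma has_bochner_integral_chord_bound:
  fixes K D \<sigma> r T \<tau> Sstar S :: real and M :: nat
  assumes "\<sigma> > 0" "\<tau> > 0" "S > 0" "D > 0" "D \<le> Sstar" "M \<ge> 1"
  defines "G \<equiv> grid_pt D Sstar M" and "V \<equiv> V_pre K D \<sigma> r T \<tau>"
  defines "\<alpha> \<equiv> \<lambda>i. (V (G i) - V (G (i - 1))) / (G i - G (i - 1))"
  shows "has_bochner_integral lborel
           (\<lambda>y. piecewise_affine G M \<alpha> (\<lambda>i. V (G (i - 1)) - \<alpha> i * G (i - 1)) 1 (V (G M) - G M) (exp y)
                * bs_density \<sigma> r \<tau> S y)
           (V_upper K D \<sigma> r T \<tau> Sstar M S)"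
proof -
  define A B where "A b = normal_cdf (d_lvl \<sigma> r \<tau> S b)"
    and "B b = normal_cdf (d_lvl \<sigma> r \<tau> S b - \<sigma> * sqrt \<tau>)" for b
  have slope: "real M / (Sstar - D) * (V (G i) - V (G (i - 1))) = \<alpha> i" if "i \<in> {1..M}" for i
    using grid_pt_step[of i D Sstar M] that by (simp add: \<alpha>_def G_def)
  have "V_upper K D \<sigma> r T \<tau> Sstar M S
      = (\<Sum>i=1..M. \<alpha> i * (A (G (i - 1)) - A (G i)) * S
                   + exp (- r * \<tau>) * (V (G (i - 1)) - \<alpha> i * G (i - 1)) * (B (G (i - 1)) - B (G i)))
        + S * A (G M) + exp (- r * \<tau>) * (V (G M) - G M) * B (G M)"
    using slope unfolding V_upper_def Let_def A_def B_def G_def V_def grid_pt_last[OF assms(6)]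
    by (simp only: cong: sum.cong)
  also have "\<dots> = (\<Sum>i=1..M. bs_tail_value \<sigma> r \<tau> S (G (i - 1)) (\<alpha> i) (V (G (i - 1)) - \<alpha> i * G (i - 1))
                  - bs_tail_value \<sigma> r \<tau> S (G i) (\<alpha> i) (V (G (i - 1)) - \<alpha> i * G (i - 1)))
             + bs_tail_value \<sigma> r \<tau> S (G M) 1 (V (G M) - G M)"
    unfolding bs_tail_value_def A_def[symmetric] B_def[symmetric]
    by (simp add: algebra_simps)
  finally have upper_value: "V_upper K D \<sigma> r T \<tau> Sstar M S = \<dots>" .
  show ?thesis
    unfolding upper_value using assms(1-5)
    by (intro has_bochner_integral_piecewise_affine) (simp_all add: G_def mono_grid_pt)
qed

lemma has_bochner_integral_tangent_bound:
  fixes K D \<sigma> r T \<tau> Sstar S :: real and M :: nat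
  assumes "\<sigma> > 0" "\<tau> > 0" "S > 0" "D > 0" "D \<le> Sstar" "M \<ge> 1"
  defines "G \<equiv> grid_pt D Sstar M" and "V \<equiv> V_pre K D \<sigma> r T \<tau>" and "V' \<equiv> V_pre_deriv K D \<sigma> r T \<tau>"
  defines "c \<equiv> \<lambda>i. (G (i - 1) + G i) / 2"
  shows "has_bochner_integral lborel
           (\<lambda>y. piecewise_affine G M (\<lambda>i. V' (c i)) (\<lambda>i. V (c i) - V' (c i) * c i)
                  1 (- (D + K * exp (- r * (T - \<tau>)))) (exp y)
                * bs_density \<sigma> r \<tau> S y)
           (V_lower K D \<sigma> r T \<tau> Sstar M S)"
proof -
  define A B where "A b = normal_cdf (d_lvl \<sigma> r \<tau> S b)"
    and "B b = normal_cdf (d_lvl \<sigma> r \<tau> S b - \<sigma> * sqrt \<tau>)" for b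
  have "V_lower K D \<sigma> r T \<tau> Sstar M S
      = S * (\<Sum>i=1..M. V' (c i) * (A (G (i - 1)) - A (G i)))
        + exp (- r * \<tau>) * (\<Sum>i=1..M. (V (c i) - V' (c i) * c i) * (B (G (i - 1)) - B (G i)))
        + S * A (G M) - exp (- r * \<tau>) * (D + K * exp (- r * (T - \<tau>))) * B (G M)"
    unfolding V_lower_def Let_def A_def B_def G_def V_def V'_def c_def grid_pt_last[OF assms(6)] ..
  also have "\<dots> = (\<Sum>i=1..M. bs_tail_value \<sigma> r \<tau> S (G (i - 1)) (V' (c i)) (V (c i) - V' (c i) * c i)
                  - bs_tail_value \<sigma> r \<tau> S (G i) (V' (c i)) (V (c i) - V' (c i) * c i))
        + bs_tail_value \<sigma> r \<tau> S (G M) 1 (- (D + K * exp (- r * (T - \<tau>))))"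
    unfolding bs_tail_value_def A_def[symmetric] B_def[symmetric]
    by (simp add: sum_distrib_left sum_subtractf sum.distrib algebra_simps)
  finally have lower_value: "V_lower K D \<sigma> r T \<tau> Sstar M S = \<dots>" .
  show ?thesis
    unfolding lower_value using assms(1-5)
    by (intro has_bochner_integral_piecewise_affine) (simp_all add: G_def mono_grid_pt)
qed

theorem theorem1:
  fixes K D \<sigma> r \<tau> T Sstar S :: real and M :: nat
  assumes "K > 0" and "D > 0" and "\<sigma> > 0" and "0 < \<tau>" and "\<tau> < T"
    and "Sstar > D" and "M \<ge> 1" and "S > 0"
  shows "V_lower K D \<sigma> r T \<tau> Sstar M S \<le> V_zero K D \<sigma> r T \<tau> S
       \<and> V_zero K D \<sigma> r T \<tau> S \<le> V_upper K D \<sigma> r T \<tau> Sstar M S"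
proof -
  define G V V' where "G = grid_pt D Sstar M" and "V = V_pre K D \<sigma> r T \<tau>"
    and "V' = V_pre_deriv K D \<sigma> r T \<tau>"
  define \<alpha> c where "\<alpha> i = (V (G i) - V (G (i - 1))) / (G i - G (i - 1))"
    and "c i = (G (i - 1) + G i) / 2" for i
  define U L where "U = piecewise_affine G M \<alpha> (\<lambda>i. V (G (i - 1)) - \<alpha> i * G (i - 1)) 1 (V (G M) - G M)"
    and "L = piecewise_affine G M (\<lambda>i. V' (c i)) (\<lambda>i. V (c i) - V' (c i) * c i)
               1 (- (D + K * exp (- r * (T - \<tau>))))"
  have grid: "mono G" "G 0 = D"
    using assms(6) by (simp_all add: G_def mono_grid_pt)
  have "D < c i" if "i \<in> {1..M}" for i
    using grid_pt_midpoint_gt[OF assms(6) that] by (simp add: c_def G_def)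
  then have "L u \<le> V u" "V u \<le> U u" for u
    using tangent_interpolant_le_V_pre[OF assms(1,3,5) grid, where c = c]
      V_pre_le_chord_interpolant[OF assms(1,3,5) grid]
    by (simp_all add: L_def U_def V_def V'_def \<alpha>_def[abs_def])
  moreover have "has_bochner_integral lborel (\<lambda>y. L (exp y) * bs_density \<sigma> r \<tau> S y)
      (V_lower K D \<sigma> r T \<tau> Sstar M S)"
    unfolding L_def V_def V'_def G_def c_def[abs_def]
    by (rule has_bochner_integral_tangent_bound) (use assms in auto)
  moreover have "has_bochner_integral lborel (\<lambda>y. U (exp y) * bs_density \<sigma> r \<tau> S y)
      (V_upper K D \<sigma> r T \<tau> Sstar M S)"
    unfolding U_def V_def G_def \<alpha>_def[abs_def]
    by (rule has_bochner_integral_chord_bound) (use assms in auto)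
  moreover have "(\<lambda>y. V (exp y) * bs_density \<sigma> r \<tau> S y) \<in> borel_measurable lborel"
    unfolding V_def bs_density_def by measurable
  moreover have "0 \<le> bs_density \<sigma> r \<tau> S y" for y
    using assms(3,4) by (rule bs_density_nonneg)
  ultimately show ?thesis
    unfolding V_zero_eq_integral_bs_density V_def[symmetric]
    by (intro integral_between_has_bochner_integrals) (auto intro: mult_right_mono)
qed

end
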